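(* Let $A$ be an infinite alphabet and let $M\in\mathbb{N}$ with $M\geq 1$. Let $\tilde f:A^{M+2}\to\{0,1\}$ be a map satisfying: (1) there exist $x_1,\dots,x_M\in A$ such that there are infinitely many $x_{M+1}\in A$ for which $$1=\tilde f(x_1,x_2,\dots,x_M,x_{M+1},x_1)=\tilde f(x_2,x_3,\dots,x_{M+1},x_1,x_2)=\cdots=\tilde f(x_M,x_{M+1},x_1,\dots,x_M)=\tilde f(x_{M+1},x_1,x_2,\dots,x_{M+1}),$$ i.e. $\tilde f$ takes the value $1$ on each of the $M+1$ words of length $M+2$ obtained by reading $M+2$ consecutive letters of the periodic sequence $x_1x_2\cdots x_Mx_{M+1}x_1x_2\cdots$ starting at positions $1,2,\dots,M+1$; (2) for each $(x_1,\dots,x_{M+1})\in A^{M+1}$ there are only finitely many $x_{M+2}\in A$ with $\tilde f(x_1,\dots,x_{M+1},x_{M+2})=1$. Let $f$ be the $(M+1)$-step shift map induced by $\tilde f$ and $X_f$ the associated $(M+1)$-step shift space. Then $X_f$ is not conjugate to any $M$-step shift space (over any alphabet $B$).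
   Context: Following Ott–Tomforde–Willis. For an alphabet $A$, let $\emptyset$ denote the empty sequence, $\Sigma_A^{fin}=\{\emptyset\}\cup\bigcup_{k\ge1}A^k$, $\Sigma_A^{inf}=A^{\mathbb N}$. The full shift is $\Sigma_A=\Sigma_A^{inf}$ if $A$ is finite and $\Sigma_A=\Sigma_A^{inf}\cup\Sigma_A^{fin}$ if $A$ is infinite. The length $l(x)$ is $k$ if $x\in A^k$ (with $l(\emptyset)=0$) and $\infty$ if $x\in\Sigma_A^{inf}$. The topology on $\Sigma_A$ has as basis the generalized cylinders $Z(x,F)=\{y\in\Sigma_A: y_i=x_i\ (1\le i\le k),\ y_{k+1}\notin F\}$ for $x=(x_1,\dots,x_k)\neq\emptyset$ and finite $F\subseteq A$, and $Z(\emptyset,F)=\{y\in\Sigma_A: y_1\notin F\}$ (the condition $y_{k+1}\notin F$ is vacuous when $F=\emptyset$; when $F\ne\emptyset$ it requires $l(y)\ge k+1$ or... precisely, $y$ of length $k$ belongs to $Z(x,F)$ as $y_{k+1}$ does not exist). The shift map $\sigma$ deletes the first letter (and sends $\emptyset$ and length-one words to $\emptyset$). A subblock of $x\in\Sigma_A$ is $u\in\Sigma_A^{fin}$ with $x=vuz$ for some $v\in\Sigma_A^{fin}$, $z\in\Sigma_A$. For $f:\bigcup_{k\ge1}A^k\to\{0,1\}$, let $X_f^{inf}=\{x\in\Sigma_A^{inf}: f(u)=1$ for every nonempty subblock $u$ of $x\}$, $X_f^{fin}=\{x\in\Sigma_A^{fin}:$ there are infinitely many $a\in A$ for which some $y\in\Sigma_A^{inf}$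 has $xay\in X_f^{inf}\}$, and $X_f=X_f^{inf}\cup X_f^{fin}$. Given $N\ge0$ and $\tilde f:A^{N+1}\to\{0,1\}$, the $N$-step shift map induced by $\tilde f$ is $f(x)=1$ if $|x|\le N$ and $f(x)=\prod_{i=1}^{|x|-N}\tilde f(x_i,\dots,x_{N+i})$ if $|x|\ge N+1$. A subset of $\Sigma_A$ is an $N$-step shift space iff it equals $X_f$ for some $N$-step shift map $f$ induced by some $\tilde f:A^{N+1}\to\{0,1\}$ (equivalently, it is the shift space defined by a set of forbidden words all of length $N+1$). A conjugacy between shift spaces $\Lambda\subseteq\Sigma_A$ and $Y\subseteq\Sigma_B$ is a bijection $\phi:\Lambda\to Y$ that is continuous, commutes with the shift maps, and satisfies $l(\phi(x))=l(x)$ for all $x\in\Lambda$. *)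

theory Defs
  imports "HOL-Analysis.Analysis" "HOL-Library.Extended_Nat"
begin

text \<open>Points of the full shift: finite words (including the empty word) or
  one-sided infinite sequences (indexed from 0) over the alphabet, which is
  the whole type 'a.\<close>
datatype 'a sq = Fin "'a list" | Inf "nat \<Rightarrow> 'a"

definition full_shift :: "'a sq set" where
  "full_shift = (if finite (UNIV :: 'a set) then range Inf else UNIV)"

fun sq_len :: "'a sq \<Rightarrow> enat" where
  "sq_len (Fin xs) = enat (length xs)"
| "sq_len (Inf x) = \<infinity>"

fun letter :: "'a sq \<Rightarrow> nat \<Rightarrow> 'a option" where
  "letter (Fin xs) i = (if i < length xs then Some (xs ! i) else None)"
| "letter (Inf x) i = Some (x i)"

fun shift :: "'a sq \<Rightarrow> 'a sq" where
  "shift (Fin xs) = Fin (tl xs)"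
| "shift (Inf x) = Inf (\<lambda>n. x (Suc n))"

definition cyl :: "'a list \<Rightarrow> 'a set \<Rightarrow> 'a sq set" where
  "cyl x F = {y \<in> full_shift.
      (\<forall>i < length x. letter y i = Some (x ! i)) \<and>
      (\<forall>a. letter y (length x) = Some a \<longrightarrow> a \<notin> F)}"

definition shift_topology :: "'a sq topology" where
  "shift_topology = topology_generated_by {cyl x F | x F. finite F}"

definition Xinf :: "('a list \<Rightarrow> bool) \<Rightarrow> (nat \<Rightarrow> 'a) set" where
  "Xinf f = {x. \<forall>i n. n \<ge> 1 \<longrightarrow> f (map (\<lambda>j. x (i + j)) [0..<n])}"

definition prep :: "'a list \<Rightarrow> (nat \<Rightarrow> 'a) \<Rightarrow> nat \<Rightarrow> 'a" where
  "prep w y n = (if n < length w then w ! n else y (n - length w))"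

definition Xfin :: "('a list \<Rightarrow> bool) \<Rightarrow> 'a list set" where
  "Xfin f = {w. infinite {a. \<exists>y. prep (w @ [a]) y \<in> Xinf f}}"

definition Xf :: "('a list \<Rightarrow> bool) \<Rightarrow> 'a sq set" where
  "Xf f = Inf ` Xinf f \<union> Fin ` Xfin f"

definition induced :: "nat \<Rightarrow> ('a list \<Rightarrow> bool) \<Rightarrow> 'a list \<Rightarrow> bool" where
  "induced N ft x = (length x \<le> N \<or>
      (\<forall>i < length x - N. ft (map (\<lambda>j. x ! (i + j)) [0..<N+1])))"

definition N_step_space :: "nat \<Rightarrow> 'a sq set \<Rightarrow> bool" where
  "N_step_space N Y \<longleftrightarrow> (\<exists>ft :: 'a list \<Rightarrow> bool. Y = Xf (induced N ft))"

definition conjugacy :: "('a sq \<Rightarrow> 'b sq) \<Rightarrow> 'a sq set \<Rightarrow> 'b sq set \<Rightarrow> bool" where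
  "conjugacy \<phi> L Y \<longleftrightarrow>
     bij_betw \<phi> L Y \<and>
     continuous_map (subtopology shift_topology L) (subtopology shift_topology Y) \<phi> \<and>
     (\<forall>x \<in> L. \<phi> (shift x) = shift (\<phi> x)) \<and>
     (\<forall>x \<in> L. sq_len (\<phi> x) = sq_len x)"

end

theory Submission
  imports Defs
begin

(*
  Let X be the (M+1)-step space of ft.
  Condition (2) says that every block of length M+1 has only finitely many allowed
  successors, so X contains no finite word of length >= M+1.  Condition (1) gives a
  word xs of length M and infinitely many letters a for which the periodic point
  (xs a)^oo lies in X; hence xs is a finite point of X, and as a -> oo these periodic
  points converge to xs.  Suppose phi : X -> Y is a conjugacy onto an M-step space Y.
  Then phi(xs) = v has length M, the images of the periodic points are (M+1)-periodic
  points of Y, and by continuity they converge to v: infinitely many of them begin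
  with v and carry infinitely many different letters at position M.  Two such points
  overlap in M letters, so in the M-step space Y they can be glued; this exhibits a
  finite point of Y of length 2M+1, whose preimage is a finite point of X of length
  2M+1, a contradiction.
*)

section \<open>Windows and the points of an N-step space\<close>

definition window :: "(nat \<Rightarrow> 'a) \<Rightarrow> nat \<Rightarrow> nat \<Rightarrow> 'a list" where
  "window x i n = map (\<lambda>j. x (i + j)) [0..<n]"

lemma length_window [simp]: "length (window x i n) = n"
  by (simp add: window_def)

lemma nth_window [simp]: "j < n \<Longrightarrow> window x i n ! j = x (i + j)"
  by (simp add: window_def)

lemma window_eq_drop: "window x i n = drop i (map x [0..<i + n])"
  by (simp add: window_def drop_map list_eq_iff_nth_eq)

lemma window_of_window:
  "k + N < n \<Longrightarrow> map (\<lambda>j. window x i n ! (k + j)) [0..<Suc N] = window x (i + k) (Suc N)"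
  by (simp add: list_eq_iff_nth_eq add.assoc del: upt_Suc)

lemma induced_window_iff:
  "induced N g (window x i n) \<longleftrightarrow> (\<forall>k. k + N < n \<longrightarrow> g (window x (i + k) (Suc N)))"
proof -
  have "induced N g (window x i n) \<longleftrightarrow>
      (n \<le> N \<or> (\<forall>k < n - N. g (map (\<lambda>j. window x i n ! (k + j)) [0..<Suc N])))"
    by (simp add: induced_def del: upt_Suc)
  also have "\<dots> \<longleftrightarrow> (\<forall>k. k + N < n \<longrightarrow> g (window x (i + k) (Suc N)))"
    by (auto simp: window_of_window less_diff_conv simp del: upt_Suc)
  finally show ?thesis .
qed

lemma Xinf_induced: "x \<in> Xinf (induced N g) \<longleftrightarrow> (\<forall>i. g (window x i (Suc N)))"
proof -
  have "x \<in> Xinf (induced N g) \<longleftrightarrow> (\<forall>i n. 1 \<le> n \<longrightarrow> induced N g (window x i n))"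
    unfolding Xinf_def window_def by simp
  also have "\<dots> \<longleftrightarrow> (\<forall>i. g (window x i (Suc N)))"
  proof
    assume "\<forall>i n. 1 \<le> n \<longrightarrow> induced N g (window x i n)"
    then show "\<forall>i. g (window x i (Suc N))"
      using induced_window_iff[of N g x _ "Suc N"] by force
  qed (simp add: induced_window_iff)
  finally show ?thesis .
qed

lemma Xinf_shift:
  assumes "x \<in> Xinf f"
  shows "(\<lambda>n. x (k + n)) \<in> Xinf f"
proof -
  have "f (map (\<lambda>j. x (k + i + j)) [0..<n])" if "1 \<le> n" for i n
    using assms that unfolding Xinf_def by blast
  then show ?thesis
    unfolding Xinf_def by (simp add: add.assoc)
qed

lemma map_prep: "map (prep w y) [0..<length w] = w"
  by (rule nth_equalityI) (simp_all add: prep_def)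

lemma prep_prefix: "prep (map z [0..<n]) (\<lambda>m. z (n + m)) = z"
  by (simp add: fun_eq_iff prep_def)

lemma Xfin_iff:
  "w \<in> Xfin f \<longleftrightarrow> infinite {a. \<exists>z \<in> Xinf f. map z [0..<Suc (length w)] = w @ [a]}"
proof -
  have "(\<exists>y. prep (w @ [a]) y \<in> Xinf f) \<longleftrightarrow> (\<exists>z \<in> Xinf f. map z [0..<Suc (length w)] = w @ [a])"
    for a
  proof
    assume "\<exists>y. prep (w @ [a]) y \<in> Xinf f"
    then show "\<exists>z \<in> Xinf f. map z [0..<Suc (length w)] = w @ [a]"
      using map_prep[of "w @ [a]"] by force
  next
    assume "\<exists>z \<in> Xinf f. map z [0..<Suc (length w)] = w @ [a]"
    then show "\<exists>y. prep (w @ [a]) y \<in> Xinf f"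
      using prep_prefix[of _ "Suc (length w)"] by metis
  qed
  then show ?thesis by (simp add: Xfin_def)
qed

lemma Inf_in_Xf [simp]: "Inf x \<in> Xf f \<longleftrightarrow> x \<in> Xinf f"
  by (auto simp: Xf_def)

lemma Fin_in_Xf [simp]: "Fin w \<in> Xf f \<longleftrightarrow> w \<in> Xfin f"
  by (auto simp: Xf_def)

lemma Xfin_no_long_words:
  assumes right_finite: "\<forall>ys. length ys = N \<longrightarrow> finite {a. ft (ys @ [a])}"
    and long: "N \<le> length w"
  shows "w \<notin> Xfin (induced N ft)"
proof
  assume w: "w \<in> Xfin (induced N ft)"
  define i where "i = length w - N"
  have "{a. \<exists>z \<in> Xinf (induced N ft). map z [0..<Suc (length w)] = w @ [a]}
      \<subseteq> {a. ft (drop i w @ [a])}"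
  proof safe
    fix a z
    assume z: "z \<in> Xinf (induced N ft)" and za: "map z [0..<Suc (length w)] = w @ [a]"
    have "i + Suc N = Suc (length w)" using long by (simp add: i_def)
    then have "window z i (Suc N) = drop i w @ [a]"
      using za long by (simp add: window_eq_drop i_def)
    moreover have "ft (window z i (Suc N))"
      using z by (simp add: Xinf_induced)
    ultimately show "ft (drop i w @ [a])" by simp
  qed
  moreover have "finite {a. ft (drop i w @ [a])}"
    using right_finite long by (simp add: i_def)
  ultimately have "finite {a. \<exists>z \<in> Xinf (induced N ft). map z [0..<Suc (length w)] = w @ [a]}"
    by (rule finite_subset)
  then show False using w by (simp add: Xfin_iff)
qed

section \<open>Periodic points and gluing\<close>

definition cyc :: "'a list \<Rightarrow> nat \<Rightarrow> 'a" where
  "cyc w n = w ! (n mod length w)"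

lemma cyc_nth: "i < length w \<Longrightarrow> cyc w i = w ! i"
  by (simp add: cyc_def)

lemma cyc_periodic: "cyc w (length w + n) = cyc w n"
  by (simp add: cyc_def)

lemma map_cyc: "map (cyc w) [0..<length w] = w"
  by (rule nth_equalityI) (simp_all add: cyc_nth)

lemma cyc_Xinf:
  assumes nonempty: "w \<noteq> []"
    and allowed: "\<And>j. j < length w \<Longrightarrow> g (window (cyc w) j (Suc N))"
  shows "cyc w \<in> Xinf (induced N g)"
proof -
  have "window (cyc w) i (Suc N) = window (cyc w) (i mod length w) (Suc N)" for i
    by (simp add: window_def cyc_def mod_add_left_eq)
  moreover have "i mod length w < length w" for i
    using nonempty by simp
  ultimately show ?thesis
    using allowed by (metis Xinf_induced)
qed

text \<open>Condition (1) of the theorem says exactly that the periodic point (xs a)^oo lies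
  in the (M+1)-step space.\<close>
lemma periodic_point_in_Xinf:
  assumes len: "length xs = M"
    and allowed: "\<forall>j \<le> M. ft (map (\<lambda>i. (xs @ [a]) ! ((j + i) mod (M + 1))) [0..<M + 2])"
  shows "cyc (xs @ [a]) \<in> Xinf (induced (M + 1) ft)"
proof (rule cyc_Xinf)
  fix j assume "j < length (xs @ [a])"
  then have "j \<le> M" using len by simp
  moreover have "window (cyc (xs @ [a])) j (Suc (M + 1))
      = map (\<lambda>i. (xs @ [a]) ! ((j + i) mod (M + 1))) [0..<M + 2]"
    using len by (simp add: window_def cyc_def del: upt_Suc)
  ultimately show "ft (window (cyc (xs @ [a])) j (Suc (M + 1)))"
    using allowed by simp
qed simp

lemma Xfin_of_periodic_extensions:
  assumes S: "infinite S" and periodic: "\<And>a. a \<in> S \<Longrightarrow> cyc (w @ [a]) \<in> Xinf f"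
  shows "w \<in> Xfin f"
proof -
  have "S \<subseteq> {a. \<exists>z \<in> Xinf f. map z [0..<Suc (length w)] = w @ [a]}"
    using periodic map_cyc[of "w @ [_]"] by force
  then have "infinite {a. \<exists>z \<in> Xinf f. map z [0..<Suc (length w)] = w @ [a]}"
    using S by (rule infinite_super)
  then show ?thesis unfolding Xfin_iff .
qed

lemma glue_agrees:
  assumes overlap: "\<And>j. j < N \<Longrightarrow> x (k + j) = y j" and n: "n < k + N"
  shows "prep (map x [0..<k]) y n = x n"
proof (cases "n < k")
  case False
  then have "y (n - k) = x n" using overlap[of "n - k"] n by simp
  then show ?thesis using False by (simp add: prep_def)
qed (simp add: prep_def)

text \<open>Gluing in an N-step space: under the same overlap condition, x up to position k
  followed by y is again a point, since each of its blocks of length N+1 is a block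
  of x or of y.\<close>
lemma glue_Xinf:
  assumes x: "x \<in> Xinf (induced N g)" and y: "y \<in> Xinf (induced N g)"
    and overlap: "\<And>j. j < N \<Longrightarrow> x (k + j) = y j"
  shows "prep (map x [0..<k]) y \<in> Xinf (induced N g)"
proof -
  let ?z = "prep (map x [0..<k]) y"
  have windows: "window ?z i (Suc N) \<in> {window x i (Suc N), window y (i - k) (Suc N)}" for i
  proof (cases "i < k")
    case True
    then have "window ?z i (Suc N) = window x i (Suc N)"
      by (auto simp: list_eq_iff_nth_eq intro!: glue_agrees[of N x k y, OF overlap])
    then show ?thesis by simp
  next
    case False
    then have "window ?z i (Suc N) = window y (i - k) (Suc N)"
      by (simp add: list_eq_iff_nth_eq prep_def)
    then show ?thesis by simp
  qed
  moreover have "g (window x i (Suc N))" "g (window y i (Suc N))" for i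
    using x y by (simp_all add: Xinf_induced)
  ultimately have "g (window ?z i (Suc N))" for i
    by (metis empty_iff insert_iff)
  then show ?thesis by (simp add: Xinf_induced)
qed

text \<open>Gluing the first N+1 letters of q a0 in front of q a
  produces points beginning with the same 2N+1 letters followed by the letter
  q a N; hence this word of length 2N+1 is a finite point of the space.\<close>
lemma long_word_in_Xfin:
  assumes q: "\<And>a. a \<in> T \<Longrightarrow> q a \<in> Xinf (induced N g)"
    and periodic: "\<And>a n. a \<in> T \<Longrightarrow> q a (Suc N + n) = q a n"
    and common: "\<And>a b j. a \<in> T \<Longrightarrow> b \<in> T \<Longrightarrow> j < N \<Longrightarrow> q a j = q b j"
    and inf: "infinite ((\<lambda>a. q a N) ` T)"
    and a0: "a0 \<in> T"
  shows "map (q a0) [0..<2 * N + 1] \<in> Xfin (induced N g)"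
proof -
  let ?u = "map (q a0) [0..<2 * N + 1]"
  have "(\<lambda>a. q a N) ` T \<subseteq> {b. \<exists>z \<in> Xinf (induced N g). map z [0..<Suc (length ?u)] = ?u @ [b]}"
  proof safe
    fix a assume a: "a \<in> T"
    let ?z = "prep (map (q a0) [0..<Suc N]) (q a)"
    have overlap: "q a0 (Suc N + j) = q a j" if "j < N" for j
      using periodic[OF a0] common[OF a0 a that] by simp
    have "map ?z [0..<2 * N + 1] = ?u"
    proof (rule map_cong[OF refl])
      fix n assume "n \<in> set [0..<2 * N + 1]"
      then have "n < Suc N + N" by (simp del: upt_Suc)
      then show "?z n = q a0 n" using overlap by (intro glue_agrees) auto
    qed
    moreover have "?z (2 * N + 1) = q a N"
      by (simp add: prep_def)
    ultimately have "map ?z [0..<Suc (length ?u)] = ?u @ [q a N]"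
      by simp
    then show "\<exists>z \<in> Xinf (induced N g). map z [0..<Suc (length ?u)] = ?u @ [q a N]"
      using glue_Xinf[OF q[OF a0] q[OF a] overlap] by blast
  qed
  then have "infinite {b. \<exists>z \<in> Xinf (induced N g). map z [0..<Suc (length ?u)] = ?u @ [b]}"
    using inf by (rule infinite_super)
  then show ?thesis unfolding Xfin_iff .
qed

section \<open>The shift topology\<close>

lemma cyl_subset_full_shift: "cyl w F \<subseteq> full_shift"
  by (auto simp: cyl_def)

lemma topspace_shift_topology: "topspace shift_topology = full_shift"
proof -
  have "cyl [] {} = full_shift" by (simp add: cyl_def)
  then have "\<Union>{cyl x F | x F. finite F} = full_shift"
    using cyl_subset_full_shift by blast
  then show ?thesis by (simp add: shift_topology_def)
qed

lemma cyl_antimono: "F \<subseteq> G \<Longrightarrow> cyl w G \<subseteq> cyl w F"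
  by (auto simp: cyl_def)

lemma Inf_in_cyl:
  "Inf x \<in> cyl w F \<longleftrightarrow> Inf x \<in> full_shift \<and> (\<forall>i < length w. x i = w ! i) \<and> x (length w) \<notin> F"
  by (auto simp: cyl_def)

lemma Fin_in_cyl_prefix:
  assumes "Fin w \<in> cyl u F"
  shows "length u \<le> length w" "\<And>i. i < length u \<Longrightarrow> u ! i = w ! i"
    and "length u < length w \<Longrightarrow> w ! length u \<notin> F"
proof -
  have prefix: "\<forall>i<length u. letter (Fin w) i = Some (u ! i)"
    and next_letter: "\<forall>a. letter (Fin w) (length u) = Some a \<longrightarrow> a \<notin> F"
    using assms by (simp_all add: cyl_def)
  show lu: "length u \<le> length w"
  proof (rule ccontr)
    assume "\<not> length u \<le> length w"
    then have "length w < length u" by simp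
    then have "letter (Fin w) (length w) = Some (u ! length w)"
      using prefix by blast
    then show False by simp
  qed
  show "u ! i = w ! i" if "i < length u" for i
    using prefix that lu by (metis letter.simps(1) option.inject order_less_le_trans)
  show "length u < length w \<Longrightarrow> w ! length u \<notin> F"
    using next_letter by simp
qed

lemma cyl_extend_subset:
  assumes lu: "length u < length w" and uw: "\<And>i. i < length u \<Longrightarrow> u ! i = w ! i"
    and next_ok: "w ! length u \<notin> F"
  shows "cyl w {} \<subseteq> cyl u F"
proof
  fix y assume "y \<in> cyl w {}"
  then have y: "y \<in> full_shift" "\<And>i. i < length w \<Longrightarrow> letter y i = Some (w ! i)"
    by (simp_all add: cyl_def)
  have "letter y i = Some (u ! i)" if "i < length u" for i
    using y(2)[of i] uw[OF that] that lu by simp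
  moreover have "letter y (length u) = Some (w ! length u)"
    using y(2) lu by blast
  ultimately show "y \<in> cyl u F"
    using y(1) next_ok by (simp add: cyl_def)
qed

lemma Fin_nhds_cyl:
  assumes "openin shift_topology U" and "Fin w \<in> U"
  shows "\<exists>F. finite F \<and> cyl w F \<subseteq> U"
proof -
  have "generate_topology_on {cyl x F | x F. finite F} U"
    using assms(1) unfolding shift_topology_def openin_topology_generated_by_iff .
  then show ?thesis using assms(2)
  proof (induction rule: generate_topology_on.induct)
    case Empty
    then show ?case by simp
  next
    case (Int a b)
    obtain F where F: "finite F" "cyl w F \<subseteq> a"
      using Int.IH(1) Int.prems by blast
    obtain G where G: "finite G" "cyl w G \<subseteq> b"
      using Int.IH(2) Int.prems by blast
    have "cyl w (F \<union> G) \<subseteq> a \<inter> b"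
      using F(2) G(2) cyl_antimono[of F "F \<union> G" w] cyl_antimono[of G "F \<union> G" w] by blast
    then show ?case using F(1) G(1) by blast
  next
    case (UN K)
    then obtain k where k: "k \<in> K" "Fin w \<in> k" by blast
    then obtain F where "finite F" "cyl w F \<subseteq> k"
      using UN.IH by blast
    then show ?case using k(1) by blast
  next
    case (Basis s)
    then obtain u F where s: "s = cyl u F" "finite F" by blast
    note prefix = Fin_in_cyl_prefix[OF Basis.prems[unfolded s(1)]]
    show ?case
    proof (cases "length u = length w")
      case True
      then have "u = w" using prefix(2) by (simp add: list_eq_iff_nth_eq)
      then show ?thesis using s by blast
    next
      case False
      then have "length u < length w" using prefix(1) by simp
      then have "cyl w {} \<subseteq> s"
        using cyl_extend_subset prefix(2,3) s(1) by blast
      then show ?thesis by blast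
    qed
  qed
qed

lemma continuous_at_Fin:
  assumes cont: "continuous_map (subtopology shift_topology X) (subtopology shift_topology Y) \<phi>"
    and X_full: "X \<subseteq> full_shift" and w: "Fin w \<in> X" and v: "\<phi> (Fin w) = Fin v"
    and F: "finite F"
  shows "\<exists>G. finite G \<and> (\<forall>x \<in> X \<inter> cyl w G. \<phi> x \<in> cyl v F)"
proof -
  have topX: "topspace (subtopology shift_topology X) = X"
    using X_full by (auto simp: topspace_shift_topology)
  have "openin shift_topology (cyl v F)"
    unfolding shift_topology_def using F by (auto intro: topology_generated_by_Basis)
  then have "openin (subtopology shift_topology Y) (cyl v F \<inter> Y)"
    by (auto simp: openin_subtopology)
  then have "openin (subtopology shift_topology X) {x \<in> X. \<phi> x \<in> cyl v F \<inter> Y}"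
    using openin_continuous_map_preimage[OF cont] topX by metis
  then obtain U where U: "openin shift_topology U" and UX: "{x \<in> X. \<phi> x \<in> cyl v F \<inter> Y} = U \<inter> X"
    by (auto simp: openin_subtopology)
  have "\<phi> (Fin w) \<in> full_shift \<inter> Y"
    using continuous_map_image_subset_topspace[OF cont] w topX
    by (auto simp: topspace_shift_topology)
  then have "\<phi> (Fin w) \<in> cyl v F \<inter> Y"
    using v by (simp add: cyl_def)
  then have "Fin w \<in> U" using UX w by blast
  then obtain G where "finite G" "cyl w G \<subseteq> U"
    using Fin_nhds_cyl[OF U] by blast
  then show ?thesis using UX by blast
qed

section \<open>Conjugacies\<close>

lemma shift_iter_Inf: "(shift ^^ k) (Inf x) = Inf (\<lambda>n. x (k + n))"
  by (induction k) simp_all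

lemma commute_shift_iter:
  assumes comm: "\<And>x. x \<in> X \<Longrightarrow> \<phi> (shift x) = shift (\<phi> x)"
    and orbit: "\<And>j. (shift ^^ j) x \<in> X"
  shows "\<phi> ((shift ^^ k) x) = (shift ^^ k) (\<phi> x)"
  by (induction k) (simp_all add: comm[OF orbit])

lemma conjugacy_Fin_image:
  assumes conj: "conjugacy \<phi> X Y" and w: "Fin w \<in> X"
  shows "\<exists>v. \<phi> (Fin w) = Fin v \<and> length v = length w"
proof -
  have "sq_len (\<phi> (Fin w)) = enat (length w)"
    using conj w by (simp add: conjugacy_def)
  then show ?thesis by (cases "\<phi> (Fin w)") auto
qed

lemma conjugacy_Fin_preimage:
  assumes conj: "conjugacy \<phi> X Y" and u: "Fin u \<in> Y"
  shows "\<exists>w. Fin w \<in> X \<and> length w = length u"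
proof -
  obtain x where x: "x \<in> X" "\<phi> x = Fin u"
    using conj u by (auto simp: conjugacy_def bij_betw_def)
  then have "sq_len x = enat (length u)"
    using conj by (metis conjugacy_def sq_len.simps(1))
  then show ?thesis using x(1) by (cases x) auto
qed

lemma conjugacy_periodic_image:
  assumes conj: "conjugacy \<phi> X Y"
    and orbit: "\<And>j. Inf (\<lambda>n. x (j + n)) \<in> X"
    and periodic: "\<And>n. x (k + n) = x n"
  shows "\<exists>r. \<phi> (Inf x) = Inf r \<and> Inf r \<in> Y \<and> (\<forall>n. r (k + n) = r n)"
proof -
  have xX: "Inf x \<in> X" using orbit[of 0] by simp
  then have "sq_len (\<phi> (Inf x)) = \<infinity>" "\<phi> (Inf x) \<in> Y"
    using conj by (auto simp: conjugacy_def bij_betw_def)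
  then obtain r where r: "\<phi> (Inf x) = Inf r" "Inf r \<in> Y"
    by (cases "\<phi> (Inf x)") auto
  have "(shift ^^ k) (Inf r) = \<phi> ((shift ^^ k) (Inf x))"
    using commute_shift_iter[of X \<phi> "Inf x" k] conj orbit r(1)
    by (simp add: conjugacy_def shift_iter_Inf)
  also have "\<dots> = Inf r"
    using periodic r(1) by (simp add: shift_iter_Inf)
  finally have "(\<lambda>n. r (k + n)) = r"
    by (simp add: shift_iter_Inf)
  then show ?thesis using r by (auto simp: fun_eq_iff)
qed

text \<open>As the letter a following w tends to infinity, the periodic points (w a)^oo
  converge to Fin w; by continuity their images Inf (q a) converge to Fin v, i.e.
  all but finitely many of them begin with v and avoid any finite set of letters
  at the next position.\<close>
lemma conjugacy_images_converge:
  assumes conj: "conjugacy \<phi> X Y" and X_full: "X \<subseteq> full_shift"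
    and w: "Fin w \<in> X" and v: "\<phi> (Fin w) = Fin v"
    and p: "\<And>a. a \<in> S \<Longrightarrow> Inf (cyc (w @ [a])) \<in> X"
    and q: "\<And>a. a \<in> S \<Longrightarrow> \<phi> (Inf (cyc (w @ [a]))) = Inf (q a)"
    and F: "finite F"
  shows "finite {a \<in> S. \<not> (\<forall>i < length v. q a i = v ! i) \<or> q a (length v) \<in> F}"
proof -
  have cont: "continuous_map (subtopology shift_topology X) (subtopology shift_topology Y) \<phi>"
    using conj by (simp add: conjugacy_def)
  obtain G where G: "finite G" "\<forall>x \<in> X \<inter> cyl w G. \<phi> x \<in> cyl v F"
    using continuous_at_Fin[OF cont X_full w v F] by blast
  have "a \<in> G"
    if a: "a \<in> S" and bad: "\<not> (\<forall>i < length v. q a i = v ! i) \<or> q a (length v) \<in> F" for a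
  proof (rule ccontr)
    assume "a \<notin> G"
    then have "Inf (cyc (w @ [a])) \<in> cyl w G"
      using p[OF a] X_full by (auto simp: Inf_in_cyl cyc_nth nth_append)
    then have "\<phi> (Inf (cyc (w @ [a]))) \<in> cyl v F" using G(2) p[OF a] by blast
    then have "Inf (q a) \<in> cyl v F" using q[OF a] by simp
    then show False using bad by (auto simp: Inf_in_cyl)
  qed
  then have "{a \<in> S. \<not> (\<forall>i < length v. q a i = v ! i) \<or> q a (length v) \<in> F} \<subseteq> G"
    by blast
  then show ?thesis using G(1) by (rule finite_subset)
qed

lemma infinite_image_if_escaping:
  assumes "infinite S" and escape: "\<And>F. finite F \<Longrightarrow> finite {a \<in> S. \<not> P a \<or> g a \<in> F}"
  shows "infinite (g ` {a \<in> S. P a})"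
proof
  assume fin: "finite (g ` {a \<in> S. P a})"
  have "S \<subseteq> {a \<in> S. \<not> P a \<or> g a \<in> g ` {a \<in> S. P a}}" by auto
  then show False using assms escape[OF fin] by (meson finite_subset)
qed

text \<open>The images of these points are (N+1)-periodic, converge to
  the image Fin v of Fin w, and take infinitely many values at position N; gluing
  them yields a finite point of length 2N+1 in the image, so X has one as well.\<close>
lemma conjugate_to_N_step_long_Fin:
  assumes conj: "conjugacy \<phi> X (Xf (induced N g))"
    and X_full: "X \<subseteq> full_shift" and w: "Fin w \<in> X" and len: "length w = N"
    and S: "infinite S"
    and orbit: "\<And>a j. a \<in> S \<Longrightarrow> Inf (\<lambda>n. cyc (w @ [a]) (j + n)) \<in> X"
  shows "\<exists>u. Fin u \<in> X \<and> length u = 2 * N + 1"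
proof -
  obtain v where v: "\<phi> (Fin w) = Fin v" "length v = N"
    using conjugacy_Fin_image[OF conj w] len by auto
  have per: "cyc (w @ [a]) (Suc N + n) = cyc (w @ [a]) n" for a n
    using cyc_periodic[of "w @ [a]" n] len by simp
  have "\<forall>a \<in> S. \<exists>r. \<phi> (Inf (cyc (w @ [a]))) = Inf r \<and> r \<in> Xinf (induced N g) \<and>
      (\<forall>n. r (Suc N + n) = r n)"
    using conjugacy_periodic_image[OF conj orbit per] by simp
  then obtain q where q: "\<forall>a \<in> S. \<phi> (Inf (cyc (w @ [a]))) = Inf (q a) \<and>
      q a \<in> Xinf (induced N g) \<and> (\<forall>n. q a (Suc N + n) = q a n)"
    by (rule bchoice[THEN exE])
  define T where "T = {a \<in> S. \<forall>i < N. q a i = v ! i}"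
  have new_letters: "infinite ((\<lambda>a. q a N) ` T)"
    unfolding T_def
  proof (rule infinite_image_if_escaping[OF S])
    have p: "Inf (cyc (w @ [a])) \<in> X" if "a \<in> S" for a
      using orbit[OF that, of 0] by simp
    fix F :: "'b set" assume "finite F"
    from conjugacy_images_converge[OF conj X_full w v(1) p _ this] q
    show "finite {a \<in> S. \<not> (\<forall>i < N. q a i = v ! i) \<or> q a N \<in> F}"
      using v(2) by simp
  qed
  then obtain a0 where a0: "a0 \<in> T"
    by (metis finite.emptyI image_empty ex_in_conv)
  have "map (q a0) [0..<2 * N + 1] \<in> Xfin (induced N g)"
  proof (rule long_word_in_Xfin[of T q N g, OF _ _ _ new_letters a0])
    show "q a \<in> Xinf (induced N g)" "q a (Suc N + n) = q a n" if "a \<in> T" for a n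
      using q that by (auto simp: T_def)
    show "q a j = q b j" if "a \<in> T" "b \<in> T" "j < N" for a b j
      using that by (simp add: T_def)
  qed
  then show ?thesis
    using conjugacy_Fin_preimage[OF conj, of "map (q a0) [0..<2 * N + 1]"] by auto
qed

text \<open>Condition (1) provides a finite point xs of length M approximated by periodic
  points, condition (2) forbids finite points of length M+1 or more; so the main
  step rules out a conjugacy to an M-step space.\<close>
theorem proposition1:
  fixes ft :: "'a list \<Rightarrow> bool" and M :: nat
  assumes infA: "infinite (UNIV :: 'a set)"
    and M1: "M \<ge> 1"
    and cond1: "\<exists>xs. length xs = M \<and>
       infinite {a. \<forall>j \<le> M.
          ft (map (\<lambda>i. (xs @ [a]) ! ((j + i) mod (M + 1))) [0..<M + 2])}"
    and cond2: "\<forall>ys. length ys = M + 1 \<longrightarrow> finite {a. ft (ys @ [a])}"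
  shows "\<not> (\<exists>(Y :: 'b sq set) \<phi>. N_step_space M Y \<and>
                conjugacy \<phi> (Xf (induced (M + 1) ft)) Y)"
proof
  assume "\<exists>(Y :: 'b sq set) \<phi>. N_step_space M Y \<and> conjugacy \<phi> (Xf (induced (M + 1) ft)) Y"
  then obtain \<phi> and gt :: "'b list \<Rightarrow> bool" where
    conj: "conjugacy \<phi> (Xf (induced (M + 1) ft)) (Xf (induced M gt))"
    unfolding N_step_space_def by blast
  obtain xs where xs: "length xs = M" and S: "infinite {a. \<forall>j \<le> M.
      ft (map (\<lambda>i. (xs @ [a]) ! ((j + i) mod (M + 1))) [0..<M + 2])}" (is "infinite ?S")
    using cond1 by blast
  have periodic: "cyc (xs @ [a]) \<in> Xinf (induced (M + 1) ft)" if "a \<in> ?S" for a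
    using periodic_point_in_Xinf[OF xs] that by simp
  have X_full: "Xf (induced (M + 1) ft) \<subseteq> full_shift"
    using infA by (simp add: full_shift_def)
  have xs_X: "Fin xs \<in> Xf (induced (M + 1) ft)"
    using Xfin_of_periodic_extensions[OF S periodic] by simp
  have orbit: "Inf (\<lambda>n. cyc (xs @ [a]) (j + n)) \<in> Xf (induced (M + 1) ft)" if "a \<in> ?S" for a j
    using Xinf_shift[OF periodic[OF that]] by simp
  obtain u where "Fin u \<in> Xf (induced (M + 1) ft)" "length u = 2 * M + 1"
    using conjugate_to_N_step_long_Fin[OF conj X_full xs_X xs S orbit] by blast
  then show False
    using Xfin_no_long_words[OF cond2, of u] by simp
qed

end
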